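(* Let $V(l_1),\ldots,V(l_6)$ be six real lines in $\mathbf{P}^2$, no three of which have a point in common, and fix an affine chart $\mathbb{R}^2 \subset \mathbf{P}^2(\mathbb{R})$ (with $\mathbb{C}^2 \subset \mathbf{P}^2(\mathbb{C})$) such that none of the six lines is the line at infinity. Then there is a union $E \subset \mathbb{R}^2$ of finitely many $1$-dimensional linear subspaces with the following property. For every $b \in \mathbb{R}^2 \setminus E$ and every differentiable map $\gamma_0\colon \mathbb{R}/\mathbb{Z} \to \mathbb{R}^2$ whose image meets the real branch locus $V(l_1\cdots l_6)(\mathbb{R})$ only in the points $\gamma_0(\overline{t}_1),\ldots,\gamma_0(\overline{t}_n)$ ($n \in\{3,4,5\}$), each of which is a double point of the arrangement (a point on exactly two of the lines), the spheroid $\alpha'\colon S^2 \to \mathbf{P}^2(\mathbb{C})$ defined below meets the branch locus $V(l_1\cdots l_6)$ only in the images of the points $(\overline{t}_i, 0)$, $i=1,\ldots,n$, i.e. only in the three to five real points $\gamma_0(\overline{t}_i)$. Construction of $\alpha'$: let $\gamma'\colon (\mathbb{R}/\mathbb{Z}) \times \mathbb{R} \to \mathbb{C}^2 \subset \mathbf{P}^2(\mathbb{C})$, $(t,u) \mapsto \gamma_0(t) + \mathrm{i}\,u b$. The limits $\lim_{u\to\pm\infty}\gamma'(t,u)$ exist in $\mathbf{P}^2(\mathbb{C})$ and are independent of $t$ (both equal the point at infinity in direction $b$), so $\gamma'$ induces a continuous map $\alpha'$ from $(\mathbb{R}/\mathbb{Z}) \times [-\infty,\infty]$ with $(\mathbb{R}/\mathbb{Z})\times\{\infty\}$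 and $(\mathbb{R}/\mathbb{Z})\times\{-\infty\}$ each collapsed to a point, which is the suspension $S(S^1) \cong S^2$. *)

theory Defs
  imports "HOL-Analysis.Analysis"
begin

(* A real line V(l) in P^2 is given by a real linear form l(x,y,z) = a x + b y + c z,
   (a,b,c) \<noteq> 0.  Points of P^2(K) are represented by nonzero homogeneous
   coordinate vectors in K^3 (all statements below are invariant under scaling). *)
type_synonym rform = "real \<times> real \<times> real"
type_synonym cpt = "complex \<times> complex \<times> complex"

definition evalC :: "rform \<Rightarrow> cpt \<Rightarrow> complex" where
  "evalC l p = (case l of (a, b, c) \<Rightarrow> case p of (x, y, z) \<Rightarrow>
      of_real a * x + of_real b * y + of_real c * z)"

definition evalR :: "rform \<Rightarrow> real \<times> real \<times> real \<Rightarrow> real" where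
  "evalR l p = (case l of (a, b, c) \<Rightarrow> case p of (x, y, z) \<Rightarrow> a * x + b * y + c * z)"

definition branch_locus :: "(nat \<Rightarrow> rform) \<Rightarrow> cpt set" where
  "branch_locus l = {p. p \<noteq> (0, 0, 0) \<and> (\<Prod>j\<in>{1..6::nat}. evalC (l j) p) = 0}"

definition proj_eq :: "cpt \<Rightarrow> cpt \<Rightarrow> bool" where
  "proj_eq p q = (\<exists>c. c \<noteq> 0 \<and> p = (c * fst q, c * fst (snd q), c * snd (snd q)))"

(* affine chart C^2 \<subseteq> P^2(C), (x,y) \<mapsto> [x:y:1]; line at infinity is z = 0 *)
definition chart :: "complex \<times> complex \<Rightarrow> cpt" where
  "chart q = (fst q, snd q, 1)"

definition embR :: "real \<times> real \<Rightarrow> complex \<times> complex" where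
  "embR q = (complex_of_real (fst q), complex_of_real (snd q))"

definition real_branch_locus :: "(nat \<Rightarrow> rform) \<Rightarrow> (real \<times> real) set" where
  "real_branch_locus l = {q. chart (embR q) \<in> branch_locus l}"

definition double_point :: "(nat \<Rightarrow> rform) \<Rightarrow> real \<times> real \<Rightarrow> bool" where
  "double_point l q = (card {j\<in>{1..6::nat}. evalC (l j) (chart (embR q)) = 0} = 2)"

definition gamma' :: "(real \<Rightarrow> real \<times> real) \<Rightarrow> real \<times> real \<Rightarrow> real \<Rightarrow> real \<Rightarrow> cpt" where
  "gamma' \<gamma>0 b t u = chart (complex_of_real (fst (\<gamma>0 t)) + \<i> * complex_of_real (u * fst b),
                            complex_of_real (snd (\<gamma>0 t)) + \<i> * complex_of_real (u * snd b))"

(* the spheroid alpha' on (R/Z) \<times> [-\<infinity>,\<infinity>] (the circle coordinate t taken in R, with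
   gamma0 1-periodic); both ends u = \<plusminus>\<infinity> go to the point at infinity [b_1:b_2:0].
   The suspension S(S^1) is the quotient collapsing u = \<infinity> and u = -\<infinity>; the image
   of alpha' is the same. *)
definition alpha' :: "(real \<Rightarrow> real \<times> real) \<Rightarrow> real \<times> real \<Rightarrow> real \<times> ereal \<Rightarrow> cpt" where
  "alpha' \<gamma>0 b tu = (if snd tu = \<infinity> \<or> snd tu = -\<infinity>
      then (complex_of_real (fst b), complex_of_real (snd b), 0)
      else gamma' \<gamma>0 b (fst tu) (real_of_ereal (snd tu)))"

end

theory Submission
  imports Defs
begin

text \<open>For a form \<open>l = (a\<^sub>1, a\<^sub>2, c)\<close>, along \<open>\<gamma>'(t, u) = \<gamma>\<^sub>0(t) + i u b\<close> the value of \<open>l\<close> is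
  \<open>l(\<gamma>\<^sub>0(t), 1) + i u (a\<^sub>1, a\<^sub>2) \<bullet> b\<close>, and at the point at infinity \<open>[b : 0]\<close> it is
  \<open>(a\<^sub>1, a\<^sub>2) \<bullet> b\<close>. So if \<open>b\<close> avoids the six lines through the origin orthogonal to the
  linear parts \<open>(a\<^sub>1, a\<^sub>2)\<close>, the spheroid can meet the lines only where \<open>u = 0\<close>, i.e. at
  real points of \<open>\<gamma>\<^sub>0\<close>, and these are among the \<open>\<gamma>\<^sub>0(t\<^sub>i)\<close> by hypothesis.\<close>

definition linear_part :: "rform \<Rightarrow> real \<times> real" where
  "linear_part l = (fst l, fst (snd l))"

definition perp :: "real \<times> real \<Rightarrow> real \<times> real" where
  "perp v = (- snd v, fst v)"

lemma linear_part_eq_0_iff: "linear_part l = 0 \<longleftrightarrow> (\<exists>c. l = (0, 0, c))"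
  by (cases l) (auto simp: linear_part_def zero_prod_def)

lemma orthogonal_in_span_perp:
  fixes v b :: "real \<times> real"
  assumes "v \<noteq> 0" "v \<bullet> b = 0"
  shows "b \<in> range (\<lambda>s. s *\<^sub>R perp v)"
proof (cases "fst v = 0")
  case True
  with assms have "snd v \<noteq> 0" "snd b = 0"
    by (auto simp: prod_eq_iff inner_prod_def)
  with True show ?thesis
    by (intro image_eqI[where x = "- fst b / snd v"]) (auto simp: perp_def prod_eq_iff)
next
  case False
  with assms have "fst b = - snd v * snd b / fst v"
    by (simp add: inner_prod_def field_simps)
  with False show ?thesis
    by (intro image_eqI[where x = "snd b / fst v"]) (auto simp: perp_def prod_eq_iff)
qed

lemma evalC_gamma':
  "evalC l (gamma' \<gamma>0 b t u) =
     complex_of_real (evalR l (fst (\<gamma>0 t), snd (\<gamma>0 t), 1)) +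
     \<i> * complex_of_real (u * (linear_part l \<bullet> b))"
  by (cases l) (simp add: evalC_def evalR_def gamma'_def chart_def linear_part_def
      inner_prod_def algebra_simps)

lemma evalC_gamma'_eq_0_iff:
  "evalC l (gamma' \<gamma>0 b t u) = 0 \<longleftrightarrow>
     evalR l (fst (\<gamma>0 t), snd (\<gamma>0 t), 1) = 0 \<and> u * (linear_part l \<bullet> b) = 0"
  unfolding evalC_gamma' by (simp add: complex_eq_iff)

lemma evalC_point_at_infinity:
  "evalC l (complex_of_real (fst b), complex_of_real (snd b), 0) =
     complex_of_real (linear_part l \<bullet> b)"
  by (cases l) (simp add: evalC_def linear_part_def inner_prod_def)

lemma evalC_chart_embR: "evalC l (chart (embR q)) = complex_of_real (evalR l (fst q, snd q, 1))"
  by (cases l) (simp add: evalC_def evalR_def chart_def embR_def)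

lemma in_branch_locus_iff:
  "p \<in> branch_locus l \<longleftrightarrow> p \<noteq> (0, 0, 0) \<and> (\<exists>j\<in>{1..6}. evalC (l j) p = 0)"
  by (simp add: branch_locus_def)

lemma in_real_branch_locus_iff:
  "q \<in> real_branch_locus l \<longleftrightarrow> (\<exists>j\<in>{1..6}. evalR (l j) (fst q, snd q, 1) = 0)"
  unfolding real_branch_locus_def in_branch_locus_iff evalC_chart_embR by (simp add: chart_def)

lemma alpha'_in_branch_locus:
  assumes transversal: "\<forall>j\<in>{1..6}. linear_part (l j) \<bullet> b \<noteq> 0"
    and "alpha' \<gamma>0 b (s, u) \<in> branch_locus l"
  shows "u = 0 \<and> \<gamma>0 s \<in> real_branch_locus l"
proof (cases "u = \<infinity> \<or> u = -\<infinity>")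
  case True
  with assms show ?thesis
    by (auto simp: alpha'_def in_branch_locus_iff evalC_point_at_infinity)
next
  case False
  then have "alpha' \<gamma>0 b (s, u) = gamma' \<gamma>0 b s (real_of_ereal u)"
    by (simp add: alpha'_def)
  with assms obtain j where "j \<in> {1..6}"
    and "evalR (l j) (fst (\<gamma>0 s), snd (\<gamma>0 s), 1) = 0"
    and "real_of_ereal u * (linear_part (l j) \<bullet> b) = 0"
    by (auto simp: in_branch_locus_iff evalC_gamma'_eq_0_iff)
  with transversal False show ?thesis
    by (cases u) (auto simp: in_real_branch_locus_iff)
qed

lemma proj_eq_refl: "proj_eq p p"
  unfolding proj_eq_def by (intro exI[where x = 1]) simp

theorem lemma4p2:
  fixes l :: "nat \<Rightarrow> rform"
  assumes nonzero: "\<forall>j\<in>{1..6}. l j \<noteq> (0, 0, 0)"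
    and no_three: "\<forall>i\<in>{1..6}. \<forall>j\<in>{1..6}. \<forall>k\<in>{1..6}. i \<noteq> j \<and> i \<noteq> k \<and> j \<noteq> k \<longrightarrow>
          \<not> (\<exists>p. p \<noteq> (0, 0, 0) \<and> evalR (l i) p = 0 \<and> evalR (l j) p = 0 \<and> evalR (l k) p = 0)"
    and not_infty: "\<forall>j\<in>{1..6}. \<not> (\<exists>c. l j = (0, 0, c))"
  shows "\<exists>E :: (real \<times> real) set.
     (\<exists>D. finite D \<and> (0, 0) \<notin> D \<and> E = (\<Union>v\<in>D. range (\<lambda>s::real. s *\<^sub>R v))) \<and>
     (\<forall>b. b \<notin> E \<longrightarrow>
       (\<forall>(\<gamma>0 :: real \<Rightarrow> real \<times> real) (n :: nat) (t :: nat \<Rightarrow> real).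
          (\<forall>s. \<gamma>0 (s + 1) = \<gamma>0 s) \<and> (\<forall>s. \<gamma>0 differentiable (at s)) \<and>
          n \<in> {3, 4, 5} \<and> (\<forall>i\<in>{1..n}. t i \<in> {0..<1}) \<and> inj_on t {1..n} \<and>
          (\<forall>s. \<gamma>0 s \<in> real_branch_locus l \<longrightarrow> (\<exists>i\<in>{1..n}. \<gamma>0 s = \<gamma>0 (t i))) \<and>
          (\<forall>i\<in>{1..n}. double_point l (\<gamma>0 (t i)))
          \<longrightarrow>
          (\<forall>s (u :: ereal). alpha' \<gamma>0 b (s, u) \<in> branch_locus l \<longrightarrow>
              (\<exists>i\<in>{1..n}. proj_eq (alpha' \<gamma>0 b (s, u)) (alpha' \<gamma>0 b (t i, 0))))))"
proof -
  define D where "D = (\<lambda>j. perp (linear_part (l j))) ` {1..6}"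
  define E where "E = (\<Union>v\<in>D. range (\<lambda>s::real. s *\<^sub>R v))"
  have linear_part_nonzero: "linear_part (l j) \<noteq> 0" if "j \<in> {1..6}" for j
    using not_infty that by (simp add: linear_part_eq_0_iff)
  then have D_nonzero: "(0, 0) \<notin> D"
    by (auto simp: D_def perp_def zero_prod_def prod_eq_iff)
  have transversal: "\<forall>j\<in>{1..6}. linear_part (l j) \<bullet> b \<noteq> 0" if "b \<notin> E" for b
    using that orthogonal_in_span_perp[OF linear_part_nonzero] by (fastforce simp: E_def D_def)
  have same_point: "alpha' \<gamma>0 b (s, 0) = alpha' \<gamma>0 b (s', 0)" if "\<gamma>0 s = \<gamma>0 s'"
    for \<gamma>0 b s s'
    using that by (simp add: alpha'_def gamma'_def zero_ereal_def)
  have branch_points: "\<exists>i\<in>{1..n}. proj_eq (alpha' \<gamma>0 b (s, u)) (alpha' \<gamma>0 b (t i, 0))"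
    if "b \<notin> E" and real_points: "\<forall>s. \<gamma>0 s \<in> real_branch_locus l \<longrightarrow> (\<exists>i\<in>{1..n}. \<gamma>0 s = \<gamma>0 (t i))"
      and "alpha' \<gamma>0 b (s, u) \<in> branch_locus l"
    for b \<gamma>0 n t s u
  proof -
    from alpha'_in_branch_locus[OF transversal] that
    have "u = 0" "\<gamma>0 s \<in> real_branch_locus l" by blast+
    with real_points same_point proj_eq_refl show ?thesis by metis
  qed
  show ?thesis
  proof (rule exI[where x = E], intro conjI)
    show "\<exists>D. finite D \<and> (0, 0) \<notin> D \<and> E = (\<Union>v\<in>D. range (\<lambda>s::real. s *\<^sub>R v))"
      using D_nonzero by (intro exI[where x = D]) (simp add: D_def E_def)
  qed (use branch_points in blast)
qed

end
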